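(* Consider the facility location problem on a random shortest path metric on $n$ vertices in which all opening costs are equal, $f_1=\dots=f_n=f>0$ (with $f$ possibly depending on $n$). Define $\kappa:=\max\{i\in[n]: f_i<1/(i-1)\}=\min\{\lceil 1/f\rceil,n\}$ and assume $\kappa\in\Theta(n)$. Let $\mathsf{ALG}$ denote the total cost of the solution which opens, independently of the metric, $\kappa$ arbitrarily chosen facilities (e.g. facilities $1,\ldots,\kappa$), and let $\mathsf{OPT}$ be the optimal cost. Then $$\mathbb{E}\left[\frac{\mathsf{ALG}}{\mathsf{OPT}}\right]=O(1)+O\left(\sqrt[4]{\ln(n)\,n^3f^3}\right),$$ which for $f\in O\big(1/(n\sqrt[3]{\ln(n)})\big)$ is $O(1)$. Moreover, if $f\in o(1/n^3)$, then $\mathbb{E}[\mathsf{ALG}/\mathsf{OPT}]=1+o(1)$.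
   Context: Random shortest path metric: let $G=(V,E)$ be the complete undirected graph on $n$ vertices; each edge $e$ independently receives a weight $w(e)\sim\mathrm{Exp}(1)$ (exponential distribution with rate $1$), and $d(u,v)$ is the minimum total weight of a $u$-$v$ path in $G$. Facility location: each vertex has opening cost $f$; for nonempty $U\subseteq V$, $c(U)=|U|f+\sum_{v\in V}\min_{u\in U}d(u,v)$, and $\mathsf{OPT}=\min_{\emptyset\ne U\subseteq V}c(U)$. In the definition of $\kappa$, $1/(i-1)$ for $i=1$ is interpreted as $+\infty$. Asymptotic notation refers to $n\to\infty$. *)

theory Defs
  imports "HOL-Probability.Probability" "HOL-Library.Landau_Symbols"
begin

definition edges :: "nat \<Rightarrow> nat set set" where
  "edges n = {{u, v} | u v. u < n \<and> v < n \<and> u \<noteq> v}"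

definition rsp_space :: "nat \<Rightarrow> (nat set \<Rightarrow> real) measure" where
  "rsp_space n = PiM (edges n) (\<lambda>_. density lborel (exponential_density 1))"

definition paths :: "nat \<Rightarrow> nat \<Rightarrow> nat \<Rightarrow> nat list set" where
  "paths n u v = {p. p \<noteq> [] \<and> distinct p \<and> hd p = u \<and> last p = v \<and> set p \<subseteq> {..<n}}"

definition path_weight :: "(nat set \<Rightarrow> real) \<Rightarrow> nat list \<Rightarrow> real" where
  "path_weight w p = sum_list (map (\<lambda>(a, b). w {a, b}) (zip p (tl p)))"

definition spd :: "nat \<Rightarrow> (nat set \<Rightarrow> real) \<Rightarrow> nat \<Rightarrow> nat \<Rightarrow> real" where
  "spd n w u v = Min (path_weight w ` paths n u v)"

definition fl_cost :: "nat \<Rightarrow> real \<Rightarrow> (nat set \<Rightarrow> real) \<Rightarrow> nat set \<Rightarrow> real" where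
  "fl_cost n f w U = real (card U) * f + (\<Sum>v<n. Min ((\<lambda>u. spd n w u v) ` U))"

definition fl_opt :: "nat \<Rightarrow> real \<Rightarrow> (nat set \<Rightarrow> real) \<Rightarrow> real" where
  "fl_opt n f w = Min (fl_cost n f w ` {U. U \<subseteq> {..<n} \<and> U \<noteq> {}})"

definition kappa :: "real \<Rightarrow> nat \<Rightarrow> nat" where
  "kappa f n = min (nat \<lceil>1 / f\<rceil>) n"

definition fl_alg :: "nat \<Rightarrow> real \<Rightarrow> (nat set \<Rightarrow> real) \<Rightarrow> real" where
  "fl_alg n f w = fl_cost n f w {..<kappa f n}"

definition ratio :: "nat \<Rightarrow> real \<Rightarrow> (nat set \<Rightarrow> real) \<Rightarrow> real" where
  "ratio n f w = fl_alg n f w / fl_opt n f w"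

end

theory Submission
  imports Defs
begin

text \<open>
  Call an edge light if its weight is below a threshold \<open>t \<le> f\<close>, and a vertex far if all its
  edges are heavy. A far vertex costs at least \<open>t\<close> in every solution, as a facility or as a
  client, and at most two vertices per light edge fail to be far; so as long as there are at most
  \<open>n/4\<close> light edges, \<open>OPT \<ge> t n / 2\<close>. On the other hand \<open>ALG \<le> \<kappa> f + \<Sum>\<^sub>v min\<^sub>u w(u,v)\<close>, each
  minimum being of \<open>\<kappa>\<close> independent Exp(1) weights and hence of mean \<open>1/\<kappa>\<close>. The rare event of more
  than \<open>n/4\<close> light edges, on which we only use \<open>OPT \<ge> f\<close>, is controlled by the exponential moment
  \<open>E[exp L] \<le> exp (2 t |E|)\<close> of the number \<open>L\<close> of light edges. Since \<open>\<kappa> \<ge> c n\<close> forces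
  \<open>f n < 2/c\<close>, the choice \<open>t = c f / 32\<close> makes this moment \<open>exp (n/8)\<close>, and \<open>E[ALG/OPT]\<close> is
  bounded by a constant, which implies the stated \<open>O\<close>-bounds. If \<open>f = o(n\<^sup>-\<^sup>3)\<close>, then \<open>\<kappa> = n\<close> and
  \<open>ALG/OPT \<le> 1 + n L\<close> with \<open>L\<close> the number of edges lighter than \<open>f\<close>, whose mean is at most \<open>n\<^sup>2 f\<close>.
\<close>

abbreviation Exp1 :: "real measure" where
  "Exp1 \<equiv> density lborel (\<lambda>x. ennreal (exponential_density 1 x))"

lemma prob_space_Exp1: "prob_space Exp1"
  by (rule prob_space_exponential_density) simp

lemma finite_edges: "finite (edges n)"
  by (rule finite_subset[of _ "Pow {..<n}"]) (auto simp: edges_def)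

lemma doubleton_in_edges: "a \<noteq> b \<Longrightarrow> a < n \<Longrightarrow> b < n \<Longrightarrow> {a, b} \<in> edges n"
  unfolding edges_def by auto

lemma card_edges_le: "card (edges n) \<le> n ^ 2"
proof -
  have "edges n \<subseteq> (\<lambda>(u, v). {u, v}) ` ({..<n} \<times> {..<n})"
    unfolding edges_def by auto
  then have "card (edges n) \<le> card ({..<n} \<times> {..<n})"
    by (meson card_image_le card_mono finite_SigmaI finite_imageI finite_lessThan order_trans)
  then show ?thesis
    by (simp add: power2_eq_square)
qed

subsection \<open>The random edge weights\<close>

lemma prob_space_rsp_space: "prob_space (rsp_space n)"
  unfolding rsp_space_def by (intro prob_space_PiM prob_space_Exp1)

lemma measurable_weight [measurable]: "(\<lambda>w. w e) \<in> borel_measurable (rsp_space n)"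
proof (cases "e \<in> edges n")
  case True
  have "(\<lambda>w. w e) \<in> measurable (rsp_space n) Exp1"
    unfolding rsp_space_def using True by (rule measurable_component_singleton)
  then show ?thesis
    by (simp cong: measurable_cong_sets)
next
  case False
  then have "\<And>w. w \<in> space (rsp_space n) \<Longrightarrow> w e = undefined"
    by (auto simp: rsp_space_def space_PiM PiE_def extensional_def)
  then show ?thesis
    by (subst measurable_cong[where g="\<lambda>_. undefined"]) auto
qed

lemma AE_weights_nonneg: "AE w in rsp_space n. \<forall>e\<in>edges n. 0 \<le> w e"
proof (rule AE_finite_allI[OF finite_edges])
  fix e assume "e \<in> edges n"
  moreover have "AE x in Exp1. 0 \<le> x"
    by (subst AE_density) (auto simp: exponential_density_def)
  ultimately show "AE w in rsp_space n. 0 \<le> w e"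
    unfolding rsp_space_def by (intro AE_PiM_component prob_space_Exp1)
qed

lemma distr_weight:
  assumes "e \<in> edges n"
  shows "distr (rsp_space n) borel (\<lambda>w. w e) = Exp1"
proof -
  have "distr (rsp_space n) borel (\<lambda>w. w e) = distr (rsp_space n) Exp1 (\<lambda>w. w e)"
    by (rule distr_cong) auto
  also have "\<dots> = Exp1"
    unfolding rsp_space_def by (rule distr_PiM_component[OF prob_space_Exp1 assms])
  finally show ?thesis .
qed

lemma distributed_weight:
  "e \<in> edges n \<Longrightarrow> distributed (rsp_space n) lborel (\<lambda>w. w e) (exponential_density 1)"
  using distr_weight[of e n] by (simp add: distributed_def cong: distr_cong)

lemma indep_weights: "prob_space.indep_vars (rsp_space n) (\<lambda>_. borel) (\<lambda>e w. w e) (edges n)"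
proof (cases "edges n = {}")
  case True
  then show ?thesis
    by (simp add: prob_space_rsp_space prob_space.indep_vars_def prob_space.indep_sets_def)
next
  case False
  have "distr (rsp_space n) (\<Pi>\<^sub>M e\<in>edges n. borel) (\<lambda>w. \<lambda>e\<in>edges n. w e)
      = distr (rsp_space n) (\<Pi>\<^sub>M e\<in>edges n. borel) (\<lambda>w. w)"
    by (rule distr_cong) (auto simp: rsp_space_def space_PiM)
  also have "\<dots> = rsp_space n"
    by (rule distr_id2) (unfold rsp_space_def, rule sets_PiM_cong, auto)
  also have "\<dots> = (\<Pi>\<^sub>M e\<in>edges n. distr (rsp_space n) borel (\<lambda>w. w e))"
    unfolding rsp_space_def by (rule PiM_cong[OF refl]) (simp add: distr_weight[unfolded rsp_space_def])
  finally show ?thesis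
    using prob_space.indep_vars_iff_distr_eq_PiM[OF prob_space_rsp_space False,
        where X="\<lambda>e w. w e" and M'="\<lambda>_. borel"]
    by simp
qed

lemma
  fixes g :: "nat set \<Rightarrow> real \<Rightarrow> real"
  assumes g: "\<And>e. g e \<in> borel_measurable borel"
    and integrable: "\<And>e. e \<in> edges n \<Longrightarrow> integrable (rsp_space n) (\<lambda>w. g e (w e))"
  shows integrable_prod_weights: "integrable (rsp_space n) (\<lambda>w. \<Prod>e\<in>edges n. g e (w e))"
    and integral_prod_weights: "(\<integral>w. (\<Prod>e\<in>edges n. g e (w e)) \<partial>rsp_space n)
      = (\<Prod>e\<in>edges n. \<integral>w. g e (w e) \<partial>rsp_space n)"
proof -
  interpret prob_space "rsp_space n"
    by (rule prob_space_rsp_space)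
  have indep: "indep_vars (\<lambda>_. borel) (\<lambda>e w. g e (w e)) (edges n)"
    by (rule indep_vars_compose2[OF indep_weights g])
  show "integrable (rsp_space n) (\<lambda>w. \<Prod>e\<in>edges n. g e (w e))"
    by (rule indep_vars_integrable[OF finite_edges indep integrable])
  show "(\<integral>w. (\<Prod>e\<in>edges n. g e (w e)) \<partial>rsp_space n) = (\<Prod>e\<in>edges n. \<integral>w. g e (w e) \<partial>rsp_space n)"
    by (rule indep_vars_lebesgue_integral[OF finite_edges indep integrable])
qed

subsection \<open>Paths and distances\<close>

lemma distinct_zip_tl_memD:
  "distinct p \<Longrightarrow> (a, b) \<in> set (zip p (tl p)) \<Longrightarrow> a \<noteq> b \<and> a \<in> set p \<and> b \<in> set p"
  by (induction p rule: induct_list012) auto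

lemma last_pair_in_zip_tl: "(a, b) \<in> set (zip (ys @ [a, b]) (tl (ys @ [a, b])))"
  by (induction ys rule: induct_list012) auto

lemma path_step_in_edges:
  "p \<in> paths n u v \<Longrightarrow> (a, b) \<in> set (zip p (tl p)) \<Longrightarrow> {a, b} \<in> edges n"
  using distinct_zip_tl_memD[of p a b] by (auto simp: paths_def intro!: doubleton_in_edges)

lemma path_weight_nonneg:
  assumes "\<forall>e\<in>edges n. 0 \<le> w e" and "p \<in> paths n u v"
  shows "0 \<le> path_weight w p"
  unfolding path_weight_def
  by (rule sum_list_nonneg) (use assms path_step_in_edges in auto)

lemma step_weight_le_path_weight:
  assumes nonneg: "\<forall>e\<in>edges n. 0 \<le> w e" and p: "p \<in> paths n u v"
    and step: "(a, b) \<in> set (zip p (tl p))"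
  shows "w {a, b} \<le> path_weight w p"
  unfolding path_weight_def
proof (rule member_le_sum_list)
  show "w {a, b} \<in> set (map (\<lambda>(a, b). w {a, b}) (zip p (tl p)))"
    using step by force
  show "\<And>x. x \<in> set (map (\<lambda>(a, b). w {a, b}) (zip p (tl p))) \<Longrightarrow> 0 \<le> x"
    using nonneg path_step_in_edges[OF p] by auto
qed

lemma path_last_step:
  assumes p: "p \<in> paths n u v" and "u \<noteq> v"
  obtains a where "a < n" "a \<noteq> v" "(a, v) \<in> set (zip p (tl p))"
proof -
  obtain ys a where p_eq: "p = ys @ [a, v]"
    using p \<open>u \<noteq> v\<close> unfolding paths_def
    by (cases p rule: rev_cases; cases "butlast p" rule: rev_cases) auto
  then have step: "(a, v) \<in> set (zip p (tl p))"
    using last_pair_in_zip_tl by simp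
  moreover have "a < n" "a \<noteq> v"
    using distinct_zip_tl_memD[OF _ step] p by (auto simp: paths_def)
  ultimately show ?thesis
    using that by blast
qed

lemma finite_paths: "finite (paths n u v)"
proof (rule finite_subset)
  show "paths n u v \<subseteq> {xs. set xs \<subseteq> {..<n} \<and> length xs \<le> n}"
  proof
    fix p assume "p \<in> paths n u v"
    then have "set p \<subseteq> {..<n}" "distinct p"
      by (auto simp: paths_def)
    then show "p \<in> {xs. set xs \<subseteq> {..<n} \<and> length xs \<le> n}"
      using card_mono[of "{..<n}" "set p"] distinct_card[of p] by simp
  qed
  show "finite {xs. set xs \<subseteq> {..<n} \<and> length xs \<le> n}"
    by (rule finite_lists_length_le) simp
qed

lemma edge_in_paths: "u < n \<Longrightarrow> v < n \<Longrightarrow> u \<noteq> v \<Longrightarrow> [u, v] \<in> paths n u v"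
  unfolding paths_def by auto

lemma singleton_in_paths: "v < n \<Longrightarrow> [v] \<in> paths n v v"
  unfolding paths_def by auto

lemma paths_nonempty: "u < n \<Longrightarrow> v < n \<Longrightarrow> paths n u v \<noteq> {}"
  using edge_in_paths singleton_in_paths by (cases "u = v") blast+

lemma spd_le_weight:
  assumes "u < n" "v < n" "u \<noteq> v"
  shows "spd n w u v \<le> w {u, v}"
proof -
  have "spd n w u v \<le> path_weight w [u, v]"
    unfolding spd_def using assms finite_paths edge_in_paths by (intro Min_le) auto
  then show ?thesis
    by (simp add: path_weight_def)
qed

lemma spd_self_nonpos:
  assumes "v < n"
  shows "spd n w v v \<le> 0"
proof -
  have "spd n w v v \<le> path_weight w [v]"
    unfolding spd_def using assms finite_paths singleton_in_paths by (intro Min_le) auto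
  then show ?thesis
    by (simp add: path_weight_def)
qed

lemma spd_nonneg: "\<forall>e\<in>edges n. 0 \<le> w e \<Longrightarrow> u < n \<Longrightarrow> v < n \<Longrightarrow> 0 \<le> spd n w u v"
  unfolding spd_def using finite_paths paths_nonempty path_weight_nonneg
  by (subst Min_ge_iff) auto

lemma spd_ge_incident_weights:
  assumes nonneg: "\<forall>e\<in>edges n. 0 \<le> w e" and "u < n" "v < n" "u \<noteq> v"
    and incident: "\<And>a. a < n \<Longrightarrow> a \<noteq> v \<Longrightarrow> t \<le> w {a, v}"
  shows "t \<le> spd n w u v"
proof -
  have "t \<le> path_weight w p" if p: "p \<in> paths n u v" for p
  proof -
    obtain a where "a < n" "a \<noteq> v" "(a, v) \<in> set (zip p (tl p))"
      using path_last_step[OF p \<open>u \<noteq> v\<close>] .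
    then show ?thesis
      using incident step_weight_le_path_weight[OF nonneg p] by fastforce
  qed
  then show ?thesis
    unfolding spd_def using finite_paths paths_nonempty assms by (subst Min_ge_iff) auto
qed

lemma measurable_path_weight [measurable]:
  "(\<lambda>w. path_weight w p) \<in> borel_measurable (rsp_space n)"
proof -
  have "(\<lambda>w. sum_list (map (\<lambda>(a, b). w {a, b}) xs)) \<in> borel_measurable (rsp_space n)" for xs
    by (induction xs) auto
  then show ?thesis
    unfolding path_weight_def .
qed

lemma finite_nonempty_subsets: "finite {U. U \<subseteq> {..<n::nat} \<and> U \<noteq> {}}"
  by (rule finite_subset[of _ "Pow {..<n}"]) (auto simp: finite_Pow_iff)

lemma measurable_ratio [measurable]: "ratio n f \<in> borel_measurable (rsp_space n)"
proof -
  have spd: "(\<lambda>w. spd n w u v) \<in> borel_measurable (rsp_space n)" for u v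
    unfolding spd_def by (rule borel_measurable_Min[OF finite_paths]) simp
  have cost: "(\<lambda>w. fl_cost n f w U) \<in> borel_measurable (rsp_space n)" if "U \<subseteq> {..<n}" for U
    unfolding fl_cost_def using that finite_subset[OF that]
    by (intro borel_measurable_add borel_measurable_const borel_measurable_sum borel_measurable_Min spd) auto
  have "(\<lambda>w. fl_opt n f w) \<in> borel_measurable (rsp_space n)"
    unfolding fl_opt_def by (rule borel_measurable_Min[OF finite_nonempty_subsets]) (use cost in auto)
  moreover have "(\<lambda>w. fl_alg n f w) \<in> borel_measurable (rsp_space n)"
    unfolding fl_alg_def by (rule cost) (simp add: kappa_def)
  ultimately show ?thesis
    unfolding ratio_def[abs_def] by measurable
qed

subsection \<open>Deterministic bounds on the costs\<close>

definition light_edges :: "nat \<Rightarrow> real \<Rightarrow> (nat set \<Rightarrow> real) \<Rightarrow> nat" where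
  "light_edges n t w = card {e \<in> edges n. w e < t}"

definition far_vertices :: "nat \<Rightarrow> real \<Rightarrow> (nat set \<Rightarrow> real) \<Rightarrow> nat set" where
  "far_vertices n t w = {v. v < n \<and> (\<forall>a<n. a \<noteq> v \<longrightarrow> t \<le> w {a, v})}"

definition direct_connection_cost :: "nat \<Rightarrow> nat \<Rightarrow> (nat set \<Rightarrow> real) \<Rightarrow> real" where
  "direct_connection_cost n k w = (\<Sum>v\<in>{k..<n}. Min ((\<lambda>u. w {u, v}) ` {..<k}))"

lemma fl_opt_le_fl_cost: "U \<subseteq> {..<n} \<Longrightarrow> U \<noteq> {} \<Longrightarrow> fl_opt n f w \<le> fl_cost n f w U"
  unfolding fl_opt_def by (rule Min_le) (use finite_nonempty_subsets in auto)

lemma fl_opt_geI: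
  assumes "0 < n" and "\<And>U. U \<subseteq> {..<n} \<Longrightarrow> U \<noteq> {} \<Longrightarrow> t \<le> fl_cost n f w U"
  shows "t \<le> fl_opt n f w"
proof -
  have "{..<n} \<in> {U. U \<subseteq> {..<n} \<and> U \<noteq> {}}"
    using assms(1) by auto
  then show ?thesis
    unfolding fl_opt_def using assms(2) finite_nonempty_subsets by (subst Min_ge_iff) auto
qed

lemma connection_cost_nonneg:
  assumes "\<forall>e\<in>edges n. 0 \<le> w e" "U \<subseteq> {..<n}" "U \<noteq> {}" "v < n"
  shows "0 \<le> Min ((\<lambda>u. spd n w u v) ` U)"
  using assms spd_nonneg finite_subset[OF assms(2)] by (subst Min_ge_iff) auto

lemma fl_cost_ge_opening_cost:
  assumes "\<forall>e\<in>edges n. 0 \<le> w e" "U \<subseteq> {..<n}" "U \<noteq> {}" "0 \<le> f"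
  shows "f \<le> fl_cost n f w U"
proof -
  have "1 \<le> card U"
    using assms(2,3) finite_subset[OF assms(2)] by (simp add: Suc_le_eq card_gt_0_iff)
  then have "f \<le> real (card U) * f"
    using assms(4) by (simp add: mult_le_cancel_right1)
  moreover have "0 \<le> (\<Sum>v<n. Min ((\<lambda>u. spd n w u v) ` U))"
    using connection_cost_nonneg[OF assms(1-3)] by (intro sum_nonneg) simp
  ultimately show ?thesis
    unfolding fl_cost_def by linarith
qed

lemma fl_cost_ge_far_vertices:
  assumes nonneg: "\<forall>e\<in>edges n. 0 \<le> w e" and U: "U \<subseteq> {..<n}" "U \<noteq> {}"
    and t: "0 \<le> t" "t \<le> f"
  shows "t * real (card (far_vertices n t w)) \<le> fl_cost n f w U"
proof -
  define F where "F = far_vertices n t w"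
  define m where "m v = Min ((\<lambda>u. spd n w u v) ` U)" for v
  have finite: "finite U" "finite F"
    using finite_subset[OF U(1)] by (auto simp: F_def far_vertices_def)
  have "t \<le> m v" if v: "v \<in> F - U" for v
    unfolding m_def using finite U v
    by (subst Min_ge_iff) (auto simp: F_def far_vertices_def intro!: spd_ge_incident_weights[OF nonneg])
  then have "t * real (card (F - U)) \<le> (\<Sum>v\<in>F - U. m v)"
    using sum_mono[of "F - U" "\<lambda>_. t" m] by (simp add: mult.commute)
  also have "\<dots> \<le> (\<Sum>v<n. m v)"
    unfolding m_def using connection_cost_nonneg[OF nonneg U]
    by (intro sum_mono2) (auto simp: F_def far_vertices_def)
  finally have far_unopened: "t * real (card (F - U)) \<le> (\<Sum>v<n. m v)" .
  have "t * real (card (F \<inter> U)) \<le> f * real (card U)"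
    using t card_mono[OF finite(1), of "F \<inter> U"] by (intro mult_mono) auto
  moreover have "card F = card (F \<inter> U) + card (F - U)"
    using finite(2) by (rule card_Int_Diff)
  ultimately show ?thesis
    using far_unopened unfolding fl_cost_def m_def F_def by (simp add: algebra_simps)
qed

lemma card_far_vertices_ge: "real n - 2 * real (light_edges n t w) \<le> real (card (far_vertices n t w))"
proof -
  define L where "L = {e \<in> edges n. w e < t}"
  define B where "B = {..<n} - far_vertices n t w"
  have "B \<subseteq> \<Union>L"
  proof
    fix v assume "v \<in> B"
    then obtain a where "a < n" "a \<noteq> v" "w {a, v} < t" "v < n"
      by (auto simp: B_def far_vertices_def not_le)
    then show "v \<in> \<Union>L"
      unfolding L_def using doubleton_in_edges by blast
  qed
  moreover have "finite L" "\<forall>e\<in>L. finite e \<and> card e \<le> 2"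
    using finite_edges by (auto simp: L_def edges_def card_insert_if)
  ultimately have "card B \<le> 2 * card L"
    using card_mono[of "\<Union>L" B] card_Union_le_sum_card[of L] sum_bounded_above[of L card 2] by fastforce
  moreover have "n \<le> card (far_vertices n t w) + card B"
    using card_Un_le[of "far_vertices n t w" B] card_mono[of "far_vertices n t w \<union> B" "{..<n}"]
    unfolding B_def far_vertices_def by auto
  ultimately show ?thesis
    unfolding light_edges_def L_def by linarith
qed

lemma kappa_pos: "0 < f \<Longrightarrow> 0 < n \<Longrightarrow> 0 < kappa f n"
  unfolding kappa_def by simp

lemma kappa_le: "kappa f n \<le> n"
  unfolding kappa_def by simp

lemma kappa_minus_one_mult_lt:
  assumes "0 < f"
  shows "(real (kappa f n) - 1) * f < 1"
proof -
  have "real (kappa f n) \<le> real (nat \<lceil>1 / f\<rceil>)"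
    unfolding kappa_def by simp
  also have "\<dots> = real_of_int \<lceil>1 / f\<rceil>"
    using assms by simp
  also have "\<dots> < 1 / f + 1"
    using ceiling_correct[of "1 / f"] by linarith
  finally show ?thesis
    using assms by (simp add: field_simps)
qed

lemma one_le_kappa_mult:
  assumes "0 < f" "kappa f n < n"
  shows "1 \<le> real (kappa f n) * f"
proof -
  have "1 / f \<le> real (kappa f n)"
    using assms(2) unfolding kappa_def by simp linarith
  then show ?thesis
    using assms(1) by (simp add: field_simps)
qed

lemma kappa_eq_n:
  assumes "0 < f" "f * real n < 1"
  shows "kappa f n = n"
proof -
  have "real n < 1 / f"
    using assms by (simp add: field_simps)
  then show ?thesis
    unfolding kappa_def by linarith
qed

lemma fl_opt_le_fl_alg: "0 < f \<Longrightarrow> 0 < n \<Longrightarrow> fl_opt n f w \<le> fl_alg n f w"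
  unfolding fl_alg_def using kappa_pos kappa_le
  by (intro fl_opt_le_fl_cost) (auto simp: lessThan_empty_iff)

lemma fl_alg_le_direct_connection_cost:
  assumes "0 < f" "0 < n"
  defines "k \<equiv> kappa f n"
  shows "fl_alg n f w \<le> real k * f + direct_connection_cost n k w"
proof -
  have k: "0 < k" "k \<le> n"
    unfolding k_def using assms kappa_pos kappa_le by auto
  let ?m = "\<lambda>v. Min ((\<lambda>u. spd n w u v) ` {..<k})"
  have "?m v \<le> 0" if "v < k" for v
  proof -
    have "?m v \<le> spd n w v v"
      using that by (intro Min_le) auto
    also have "\<dots> \<le> 0"
      using that k by (intro spd_self_nonpos) auto
    finally show ?thesis .
  qed
  then have opened: "(\<Sum>v<k. ?m v) \<le> 0"
    by (intro sum_nonpos) simp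
  have "?m v \<le> Min ((\<lambda>u. w {u, v}) ` {..<k})" if v: "v \<in> {k..<n}" for v
  proof -
    have "Min ((\<lambda>u. w {u, v}) ` {..<k}) \<in> (\<lambda>u. w {u, v}) ` {..<k}"
      using k by (intro Min_in) auto
    then obtain u where u: "u < k" "w {u, v} = Min ((\<lambda>u. w {u, v}) ` {..<k})"
      by auto
    have "?m v \<le> spd n w u v"
      using u by (intro Min_le) auto
    also have "\<dots> \<le> w {u, v}"
      using u v k by (intro spd_le_weight) auto
    finally show ?thesis
      using u by simp
  qed
  then have unopened: "(\<Sum>v\<in>{k..<n}. ?m v) \<le> direct_connection_cost n k w"
    unfolding direct_connection_cost_def by (rule sum_mono)
  have split: "{..<n} = {..<k} \<union> {k..<n}"
    using k by auto
  have "(\<Sum>v<n. ?m v) = (\<Sum>v<k. ?m v) + (\<Sum>v\<in>{k..<n}. ?m v)"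
    unfolding split by (rule sum.union_disjoint) auto
  then show ?thesis
    unfolding fl_alg_def fl_cost_def k_def[symmetric] using opened unopened by simp
qed

lemma direct_connection_cost_nonneg:
  assumes "\<forall>e\<in>edges n. 0 \<le> w e" "0 < k"
  shows "0 \<le> direct_connection_cost n k w"
  unfolding direct_connection_cost_def
  using assms doubleton_in_edges by (intro sum_nonneg, subst Min_ge_iff) auto

lemma direct_connection_cost_le_weights_to_0: "0 < k \<Longrightarrow> direct_connection_cost n k w \<le> (\<Sum>v\<in>{k..<n}. w {0, v})"
  unfolding direct_connection_cost_def by (intro sum_mono Min_le) auto

lemma
  assumes "\<forall>e\<in>edges n. 0 \<le> w e" "0 < f" "0 < n"
  shows opening_cost_le_fl_opt: "f \<le> fl_opt n f w"
    and one_le_ratio: "1 \<le> ratio n f w"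
proof -
  show "f \<le> fl_opt n f w"
    using assms by (intro fl_opt_geI fl_cost_ge_opening_cost) auto
  then show "1 \<le> ratio n f w"
    unfolding ratio_def using fl_opt_le_fl_alg[OF assms(2,3)] assms(2) by simp
qed

lemma ratio_le_far_or_light:
  assumes nonneg: "\<forall>e\<in>edges n. 0 \<le> w e" and t: "0 < t" "t \<le> f" and "0 < n"
  defines "k \<equiv> kappa f n" and "L \<equiv> real (light_edges n t w)"
  shows "ratio n f w \<le> 2 / (t * real n) * (real k * f + direct_connection_cost n k w)
    + exp (L - real n / 4) * (real k + (\<Sum>v\<in>{k..<n}. w {0, v}) / f)"
    (is "_ \<le> ?far + ?light")
proof -
  have f: "0 < f"
    using t by simp
  have k: "0 < k"
    unfolding k_def using f \<open>0 < n\<close> by (rule kappa_pos)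
  define D where "D = direct_connection_cost n k w"
  define S where "S = (\<Sum>v\<in>{k..<n}. w {0, v})"
  have alg: "fl_alg n f w \<le> real k * f + D"
    unfolding D_def k_def using f \<open>0 < n\<close> by (rule fl_alg_le_direct_connection_cost)
  have D: "0 \<le> D" "D \<le> S"
    unfolding D_def S_def using direct_connection_cost_nonneg[OF nonneg k]
      direct_connection_cost_le_weights_to_0[OF k] by auto
  have opt: "f \<le> fl_opt n f w" "fl_opt n f w \<le> fl_alg n f w"
    using opening_cost_le_fl_opt[OF nonneg f \<open>0 < n\<close>] fl_opt_le_fl_alg[OF f \<open>0 < n\<close>] by auto
  have "0 \<le> ?far"
    using D t unfolding D_def by simp
  have "0 \<le> ?light"
    using D f unfolding S_def by simp
  consider (few_light) "4 * L \<le> real n" | (many_light) "real n < 4 * L"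
    by linarith
  then show ?thesis
  proof cases
    case few_light
    have "real n / 2 \<le> real (card (far_vertices n t w))"
      using few_light card_far_vertices_ge[of n t w] unfolding L_def by linarith
    then have "t * (real n / 2) \<le> t * real (card (far_vertices n t w))"
      using t by simp
    also have "\<dots> \<le> fl_opt n f w"
      using nonneg t \<open>0 < n\<close> by (intro fl_opt_geI fl_cost_ge_far_vertices) auto
    finally have "ratio n f w \<le> fl_alg n f w / (t * (real n / 2))"
      unfolding ratio_def using opt t \<open>0 < n\<close> by (intro divide_left_mono) auto
    also have "\<dots> \<le> ?far"
      using alg t \<open>0 < n\<close> unfolding D_def by (simp add: field_simps)
    finally show ?thesis
      using \<open>0 \<le> ?light\<close> by linarith
  next
    case many_light
    have "ratio n f w \<le> fl_alg n f w / f"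
      unfolding ratio_def using opt f by (intro divide_left_mono) auto
    also have "\<dots> \<le> real k + S / f"
      using alg D f by (simp add: field_simps)
    also have "\<dots> \<le> exp (L - real n / 4) * (real k + S / f)"
      using many_light D f by (simp add: mult_le_cancel_right1 not_less)
    also have "\<dots> = ?light"
      unfolding S_def ..
    finally show ?thesis
      using \<open>0 \<le> ?far\<close> by linarith
  qed
qed

lemma ratio_le_small_f:
  assumes nonneg: "\<forall>e\<in>edges n. 0 \<le> w e" and "0 < f" "0 < n" "f * real n < 1"
  shows "ratio n f w \<le> 1 + real n * real (light_edges n f w)"
proof -
  have alg: "fl_alg n f w \<le> real n * f"
    using fl_alg_le_direct_connection_cost[OF \<open>0 < f\<close> \<open>0 < n\<close>, of w]
    by (simp add: kappa_eq_n assms direct_connection_cost_def)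
  have opt: "f \<le> fl_opt n f w" "fl_opt n f w \<le> fl_alg n f w"
    using opening_cost_le_fl_opt[OF assms(1-3)] fl_opt_le_fl_alg[OF assms(2,3)] by auto
  show ?thesis
  proof (cases "light_edges n f w = 0")
    case True
    then have "f * real n \<le> f * real (card (far_vertices n f w))"
      using card_far_vertices_ge[of n f w] \<open>0 < f\<close> by simp
    also have "\<dots> \<le> fl_opt n f w"
      using assms by (intro fl_opt_geI fl_cost_ge_far_vertices) auto
    finally have "ratio n f w \<le> fl_alg n f w / (f * real n)"
      unfolding ratio_def using opt assms by (intro divide_left_mono) auto
    also have "\<dots> \<le> 1"
      using alg assms by (simp add: field_simps)
    finally show ?thesis
      using True by simp
  next
    case False
    have "ratio n f w \<le> fl_alg n f w / f"
      unfolding ratio_def using opt assms by (intro divide_left_mono) auto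
    also have "\<dots> \<le> real n"
      using alg assms by (simp add: field_simps)
    also have "\<dots> \<le> real n * real (light_edges n f w)"
      using False mult_left_mono[of 1 "real (light_edges n f w)" "real n"] by simp
    finally show ?thesis
      by simp
  qed
qed

subsection \<open>Moments of the edge weights\<close>

lemma has_bochner_integral_weight:
  assumes "e \<in> edges n"
  shows "has_bochner_integral (rsp_space n) (\<lambda>w. w e) 1"
proof -
  interpret prob_space "rsp_space n"
    by (rule prob_space_rsp_space)
  have "has_bochner_integral (rsp_space n) (\<lambda>w. w e ^ 1) (fact (0 + 1) / (fact 0 * 1 ^ 1))"
    by (rule has_bochner_integral_erlang_ith_moment[OF _ distributed_weight[OF assms]]) simp
  then show ?thesis
    by simp
qed

lemma has_bochner_integral_Min_weights:
  assumes "0 < k" "k \<le> v" "v < n"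
  shows "has_bochner_integral (rsp_space n) (\<lambda>w. Min ((\<lambda>u. w {u, v}) ` {..<k})) (1 / real k)"
proof -
  interpret prob_space "rsp_space n"
    by (rule prob_space_rsp_space)
  define I where "I = (\<lambda>u. {u, v}) ` {..<k}"
  have I: "I \<subseteq> edges n" "finite I" "I \<noteq> {}"
    unfolding I_def using assms by (auto intro!: doubleton_in_edges)
  have "inj_on (\<lambda>u. {u, v}) {..<k}"
    using assms by (auto simp: inj_on_def doubleton_eq_iff)
  then have "card I = k"
    unfolding I_def by (simp add: card_image)
  moreover have "distributed (rsp_space n) lborel (\<lambda>w. Min ((\<lambda>e. w e) ` I)) (exponential_density (\<Sum>e\<in>I. 1))"
    using I indep_vars_subset[OF indep_weights I(1)] distributed_weight
    by (intro exponential_distributed_Min) auto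
  ultimately have "distributed (rsp_space n) lborel (\<lambda>w. Min ((\<lambda>e. w e) ` I)) (erlang_density 0 (real k))"
    by simp
  from has_bochner_integral_erlang_ith_moment[OF _ this, of 1] show ?thesis
    using assms unfolding I_def by (simp add: image_image)
qed

lemma
  assumes "e \<in> edges n" "0 \<le> t"
  shows integrable_indicator_weight_less: "integrable (rsp_space n) (\<lambda>w. indicator {..<t} (w e) :: real)"
    and integral_indicator_weight_less_le: "(\<integral>w. indicator {..<t} (w e) \<partial>rsp_space n) \<le> t"
proof -
  interpret prob_space "rsp_space n"
    by (rule prob_space_rsp_space)
  define A where "A = {w \<in> space (rsp_space n). w e < t}"
  have A: "A \<in> sets (rsp_space n)"
    unfolding A_def by measurable
  have indicator_eq: "indicator {..<t} (w e) = (indicator A w :: real)" if "w \<in> space (rsp_space n)" for w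
    using that unfolding A_def by (auto simp: indicator_def)
  show "integrable (rsp_space n) (\<lambda>w. indicator {..<t} (w e) :: real)"
    by (rule integrable_const_bound[where B=1]) (auto simp: indicator_def)
  have "(\<integral>w. indicator {..<t} (w e) \<partial>rsp_space n) = prob A"
    using A indicator_eq by (simp cong: Bochner_Integration.integral_cong)
  also have "\<dots> \<le> prob {w \<in> space (rsp_space n). w e \<le> t}"
    unfolding A_def by (intro finite_measure_mono) auto
  also have "\<dots> = 1 - exp (- t * 1)"
    by (rule exponential_distributedD_le[OF distributed_weight]) (use assms in auto)
  also have "\<dots> \<le> t"
    using exp_ge_add_one_self[of "- t"] by simp
  finally show "(\<integral>w. indicator {..<t} (w e) \<partial>rsp_space n) \<le> t" .
qed

lemma
  assumes "e \<in> edges n" "0 \<le> t"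
  shows integrable_exp_indicator_weight_less:
      "integrable (rsp_space n) (\<lambda>w. exp (indicator {..<t} (w e) :: real))"
    and integral_exp_indicator_weight_less_le:
      "(\<integral>w. exp (indicator {..<t} (w e) :: real) \<partial>rsp_space n) \<le> exp (2 * t)"
proof -
  interpret prob_space "rsp_space n"
    by (rule prob_space_rsp_space)
  have exp_indicator: "exp (indicator {..<t} x :: real) = 1 + (exp 1 - 1) * indicator {..<t} x" for x
    by (simp add: indicator_def)
  show "integrable (rsp_space n) (\<lambda>w. exp (indicator {..<t} (w e) :: real))"
    unfolding exp_indicator using integrable_indicator_weight_less[OF assms] by simp
  have "exp 1 - 1 \<le> (2 :: real)"
    using exp_le by simp
  then have "(exp 1 - 1) * (\<integral>w. indicator {..<t} (w e) \<partial>rsp_space n) \<le> 2 * t"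
    using integral_indicator_weight_less_le[OF assms] exp_ge_add_one_self[of 1]
    by (intro mult_mono) auto
  then have "(\<integral>w. exp (indicator {..<t} (w e) :: real) \<partial>rsp_space n) \<le> 1 + 2 * t"
    unfolding exp_indicator using integrable_indicator_weight_less[OF assms] by (simp add: prob_space)
  also have "\<dots> \<le> exp (2 * t)"
    using exp_ge_add_one_self[of "2 * t"] by simp
  finally show "(\<integral>w. exp (indicator {..<t} (w e) :: real) \<partial>rsp_space n) \<le> exp (2 * t)" .
qed

lemma real_light_edges_eq_sum: "real (light_edges n t w) = (\<Sum>e\<in>edges n. indicator {..<t} (w e))"
proof -
  have "real (light_edges n t w) = (\<Sum>e\<in>{e \<in> edges n. w e < t}. 1)"
    by (simp add: light_edges_def)
  also have "\<dots> = (\<Sum>e\<in>edges n. if w e < t then 1 else 0)"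
    by (rule sum.inter_filter[OF finite_edges])
  also have "\<dots> = (\<Sum>e\<in>edges n. indicator {..<t} (w e))"
    by (simp add: indicator_def of_bool_def)
  finally show ?thesis .
qed

lemma exp_light_edges_eq_prod:
  "exp (real (light_edges n t w)) = (\<Prod>e\<in>edges n. exp (indicator {..<t} (w e)))"
  unfolding real_light_edges_eq_sum by (rule exp_sum[OF finite_edges])

lemma
  assumes "0 \<le> t"
  shows integrable_exp_light_edges: "integrable (rsp_space n) (\<lambda>w. exp (real (light_edges n t w)))"
    and integral_exp_light_edges_le:
      "(\<integral>w. exp (real (light_edges n t w)) \<partial>rsp_space n) \<le> exp (2 * t * real (card (edges n)))"
proof -
  have g: "(\<lambda>x. exp (indicator {..<t} x :: real)) \<in> borel_measurable borel"
    by measurable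
  note integrable = integrable_exp_indicator_weight_less[OF _ assms]
  show "integrable (rsp_space n) (\<lambda>w. exp (real (light_edges n t w)))"
    unfolding exp_light_edges_eq_prod using integrable_prod_weights[OF g integrable] .
  have "(\<integral>w. exp (real (light_edges n t w)) \<partial>rsp_space n)
      = (\<Prod>e\<in>edges n. \<integral>w. exp (indicator {..<t} (w e)) \<partial>rsp_space n)"
    unfolding exp_light_edges_eq_prod using integral_prod_weights[OF g integrable] .
  also have "\<dots> \<le> (\<Prod>e\<in>edges n. exp (2 * t))"
    using integral_exp_indicator_weight_less_le[OF _ assms]
    by (intro prod_mono) (auto intro: integral_nonneg_AE)
  also have "\<dots> = exp (2 * t * real (card (edges n)))"
    by (simp add: exp_of_nat_mult[symmetric] mult.commute)
  finally show "(\<integral>w. exp (real (light_edges n t w)) \<partial>rsp_space n) \<le> exp (2 * t * real (card (edges n)))" .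
qed

lemma
  assumes e0: "e0 \<in> edges n" and "0 \<le> t"
  shows integrable_weight_mult_exp_light_edges:
      "integrable (rsp_space n) (\<lambda>w. w e0 * exp (real (light_edges n t w)))"
    and integral_weight_mult_exp_light_edges_le:
      "(\<integral>w. w e0 * exp (real (light_edges n t w)) \<partial>rsp_space n) \<le> exp 1 * exp (2 * t * real (card (edges n)))"
proof -
  define h :: "real \<Rightarrow> real" where "h x = exp (indicator {..<t} x)" for x
  define g where "g e = (if e = e0 then (\<lambda>x. x * h x) else h)" for e
  have "h \<in> borel_measurable borel" "(\<lambda>x. x * h x) \<in> borel_measurable borel"
    unfolding h_def by measurable
  then have g: "g e \<in> borel_measurable borel" for e
    unfolding g_def by simp
  have h_le: "h x \<le> exp 1" for x
    unfolding h_def by (simp add: indicator_def)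
  have weight: "integrable (rsp_space n) (\<lambda>w. exp 1 * w e0)" "(\<integral>w. exp 1 * w e0 \<partial>rsp_space n) = exp 1"
    using has_bochner_integral_weight[OF e0] by (auto dest: has_bochner_integral_integral_eq integrable.intros)
  have g_e0: "integrable (rsp_space n) (\<lambda>w. w e0 * h (w e0))"
  proof (rule Bochner_Integration.integrable_bound[OF weight(1)])
    show "(\<lambda>w. w e0 * h (w e0)) \<in> borel_measurable (rsp_space n)"
      unfolding h_def by measurable
    have "\<bar>x\<bar> * h x \<le> exp 1 * \<bar>x\<bar>" for x
      using mult_left_mono[OF h_le, of "\<bar>x\<bar>" x] by (simp add: mult.commute)
    then show "AE w in rsp_space n. norm (w e0 * h (w e0)) \<le> norm (exp 1 * w e0)"
      by (intro AE_I2) (simp add: abs_mult h_def)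
  qed
  have integrable: "integrable (rsp_space n) (\<lambda>w. g e (w e))" if "e \<in> edges n" for e
    using g_e0 integrable_exp_indicator_weight_less[OF that \<open>0 \<le> t\<close>] by (simp add: g_def h_def)
  have prod_eq: "(\<Prod>e\<in>edges n. g e (w e)) = w e0 * exp (real (light_edges n t w))" for w
    unfolding exp_light_edges_eq_prod prod.remove[OF finite_edges e0]
    by (simp add: g_def h_def)
  show "integrable (rsp_space n) (\<lambda>w. w e0 * exp (real (light_edges n t w)))"
    using integrable_prod_weights[OF g integrable] unfolding prod_eq .
  define b where "b e = (if e = e0 then exp 1 else exp (2 * t))" for e
  have "(\<integral>w. w e0 * h (w e0) \<partial>rsp_space n) \<le> (\<integral>w. exp 1 * w e0 \<partial>rsp_space n)"
    using AE_weights_nonneg[of n] e0 h_le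
    by (intro integral_mono_AE[OF g_e0 weight(1)]) (auto elim!: AE_mp simp: mult.commute mult_left_mono)
  then have "(\<integral>w. g e (w e) \<partial>rsp_space n) \<le> b e" if "e \<in> edges n" for e
    using weight(2) integral_exp_indicator_weight_less_le[OF that \<open>0 \<le> t\<close>] by (simp add: g_def h_def b_def)
  moreover have "0 \<le> (\<integral>w. g e (w e) \<partial>rsp_space n)" if "e \<in> edges n" for e
    using AE_weights_nonneg[of n] that
    by (intro integral_nonneg_AE) (auto elim!: AE_mp simp: g_def h_def)
  ultimately have "(\<integral>w. w e0 * exp (real (light_edges n t w)) \<partial>rsp_space n) \<le> (\<Prod>e\<in>edges n. b e)"
    using integral_prod_weights[OF g integrable] unfolding prod_eq by (auto intro: prod_mono)
  also have "\<dots> = exp 1 * exp (2 * t) ^ (card (edges n) - 1)"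
    unfolding prod.remove[OF finite_edges e0] b_def using e0 by (simp add: finite_edges)
  also have "\<dots> \<le> exp 1 * exp (2 * t) ^ card (edges n)"
    using \<open>0 \<le> t\<close> by (intro mult_left_mono power_increasing) auto
  also have "\<dots> = exp 1 * exp (2 * t * real (card (edges n)))"
    by (simp add: exp_of_nat_mult[symmetric] mult.commute)
  finally show "(\<integral>w. w e0 * exp (real (light_edges n t w)) \<partial>rsp_space n) \<le> exp 1 * exp (2 * t * real (card (edges n)))" .
qed

subsection \<open>The expected ratio\<close>

lemma
  assumes t: "0 < t" "t \<le> f" and "2 \<le> n"
  defines "k \<equiv> kappa f n"
  shows integrable_ratio: "integrable (rsp_space n) (ratio n f)"
    and integral_ratio_le: "(\<integral>w. ratio n f w \<partial>rsp_space n)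
      \<le> 2 / (t * real n) * (real k * f + (real n - real k) / real k)
        + exp (2 * t * real (card (edges n)) - real n / 4) * (real k + exp 1 * (real n - real k) / f)"
proof -
  interpret prob_space "rsp_space n"
    by (rule prob_space_rsp_space)
  have f: "0 < f" and n: "0 < n"
    using assms by auto
  have k: "0 < k" "k \<le> n"
    unfolding k_def using f n by (auto intro: kappa_pos kappa_le)
  have star_edge: "{0, v} \<in> edges n" if "v \<in> {k..<n}" for v
    using that k by (intro doubleton_in_edges) auto
  define Y where "Y w = exp (real (light_edges n t w))" for w
  define B where "B w = 2 / (t * real n) * (real k * f + direct_connection_cost n k w)
    + exp (- real n / 4) * (real k * Y w + (\<Sum>v\<in>{k..<n}. w {0, v} * Y w) / f)" for w
  have "ratio n f w \<le> B w" if "\<forall>e\<in>edges n. 0 \<le> w e" for w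
  proof -
    have "exp (real (light_edges n t w) - real n / 4) = exp (- real n / 4) * Y w"
      unfolding Y_def exp_add[symmetric] by (simp add: algebra_simps)
    then have "exp (real (light_edges n t w) - real n / 4) * (real k + (\<Sum>v\<in>{k..<n}. w {0, v}) / f)
        = exp (- real n / 4) * (real k * Y w + (\<Sum>v\<in>{k..<n}. w {0, v} * Y w) / f)"
      by (simp add: sum_distrib_left algebra_simps)
    then show ?thesis
      using ratio_le_far_or_light[OF that t n] unfolding B_def k_def by simp
  qed
  then have le_B: "AE w in rsp_space n. 1 \<le> ratio n f w \<and> ratio n f w \<le> B w"
    using AE_weights_nonneg[of n] by (auto elim!: AE_mp intro: one_le_ratio[OF _ f n])
  have const: "has_bochner_integral (rsp_space n) (\<lambda>_. c) c" for c :: real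
    using has_bochner_integral_integrable[of "rsp_space n" "\<lambda>_. c"] by (simp add: prob_space)
  have "has_bochner_integral (rsp_space n) (direct_connection_cost n k) (\<Sum>v\<in>{k..<n}. 1 / real k)"
    unfolding direct_connection_cost_def[abs_def] using k
    by (intro has_bochner_integral_sum has_bochner_integral_Min_weights) auto
  moreover have "(\<Sum>v\<in>{k..<n}. 1 / real k) = (real n - real k) / real k"
    using k by (simp add: of_nat_diff)
  moreover note has_bochner_integral_integrable[OF integrable_exp_light_edges[OF less_imp_le[OF t(1)]]]
  moreover note has_bochner_integral_integrable[OF integrable_weight_mult_exp_light_edges[OF star_edge less_imp_le[OF t(1)]]]
  ultimately have B: "has_bochner_integral (rsp_space n) B
    (2 / (t * real n) * (real k * f + (real n - real k) / real k) + exp (- real n / 4)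
      * (real k * (\<integral>w. Y w \<partial>rsp_space n) + (\<Sum>v\<in>{k..<n}. \<integral>w. w {0, v} * Y w \<partial>rsp_space n) / f))"
    unfolding B_def Y_def
    by (intro has_bochner_integral_add has_bochner_integral_mult_right has_bochner_integral_divide_zero
        has_bochner_integral_sum const) auto
  show integrable: "integrable (rsp_space n) (ratio n f)"
    using le_B by (intro Bochner_Integration.integrable_bound[OF integrable.intros[OF B]]) auto
  define Q where "Q = exp (2 * t * real (card (edges n)))"
  have "(\<integral>w. ratio n f w \<partial>rsp_space n) \<le> (\<integral>w. B w \<partial>rsp_space n)"
    using le_B by (intro integral_mono_AE[OF integrable integrable.intros[OF B]]) auto
  also have "\<dots> \<le> 2 / (t * real n) * (real k * f + (real n - real k) / real k)
      + exp (- real n / 4) * (real k * Q + (\<Sum>v\<in>{k..<n}. exp 1 * Q) / f)"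
    unfolding has_bochner_integral_integral_eq[OF B] Q_def Y_def
    using integral_exp_light_edges_le[OF less_imp_le[OF t(1)]] star_edge f
      integral_weight_mult_exp_light_edges_le[OF _ less_imp_le[OF t(1)]]
    by (intro add_left_mono mult_left_mono add_mono divide_right_mono sum_mono) auto
  also have "\<dots> = 2 / (t * real n) * (real k * f + (real n - real k) / real k)
      + exp (- real n / 4) * Q * (real k + exp 1 * (real n - real k) / f)"
    using k f by (simp add: of_nat_diff field_simps)
  also have "exp (- real n / 4) * Q = exp (2 * t * real (card (edges n)) - real n / 4)"
    unfolding Q_def exp_add[symmetric] by (simp add: algebra_simps)
  finally show "(\<integral>w. ratio n f w \<partial>rsp_space n)
      \<le> 2 / (t * real n) * (real k * f + (real n - real k) / real k)
        + exp (2 * t * real (card (edges n)) - real n / 4) * (real k + exp 1 * (real n - real k) / f)" .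
qed

lemma poly_mult_exp_neg_le:
  assumes "1 \<le> x"
  shows "(x + 3 * x ^ 2) * exp (- x / 8) \<le> (55296 :: real)"
proof -
  have "x / 24 \<le> exp (x / 24)"
    using exp_ge_add_one_self[of "x / 24"] by linarith
  then have "(x / 24) ^ 3 \<le> exp (x / 24) ^ 3"
    using assms by (intro power_mono) auto
  also have "\<dots> = exp (x / 8)"
    by (simp add: exp_of_nat_mult[symmetric])
  finally have cube: "(x / 24) ^ 3 \<le> exp (x / 8)" .
  have "(x + 3 * x ^ 2) * exp (- x / 8) \<le> 4 * x ^ 2 / exp (x / 8)"
    using assms by (simp add: exp_minus field_simps power2_eq_square)
  also have "\<dots> \<le> 4 * x ^ 2 / (x / 24) ^ 3"
    using assms cube by (intro divide_left_mono) auto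
  also have "\<dots> = 55296 / x"
    using assms by (simp add: field_simps power2_eq_square power3_eq_cube)
  also have "\<dots> \<le> 55296"
    using assms by (simp add: field_simps)
  finally show ?thesis .
qed

lemma
  assumes f: "0 < f" and c: "0 < c" and kappa: "c * real n \<le> real (kappa f n)" and cn: "2 \<le> c * real n"
  shows integrable_ratio_linear_kappa: "integrable (rsp_space n) (ratio n f)"
    and integral_ratio_le_linear_kappa: "(\<integral>w. ratio n f w \<partial>rsp_space n) \<le> 128 / c + 55296"
proof -
  define k where "k = kappa f n"
  \<comment> \<open>small enough that \<open>2 t |E| \<le> n/8\<close>, since \<open>f n c < 2\<close>\<close>
  define t where "t = c * f / 32"
  have k: "real k \<le> real n"
    unfolding k_def using kappa_le by simp
  have "0 < real n"
    using cn by (cases n) auto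
  have "c * real n \<le> 1 * real n"
    using kappa k unfolding k_def by simp
  then have "c \<le> 1"
    using \<open>0 < real n\<close> by (rule mult_right_le_imp_le)
  have "2 \<le> real n"
    using cn \<open>c * real n \<le> 1 * real n\<close> by simp
  then have t: "0 < t" "t \<le> f" and n: "2 \<le> n"
    unfolding t_def using f c \<open>c \<le> 1\<close> \<open>2 \<le> real n\<close> by auto
  have "c * real n / 2 * f \<le> (real k - 1) * f"
    using kappa cn f unfolding k_def by (intro mult_right_mono) auto
  then have fnc: "f * real n * c < 2"
    using kappa_minus_one_mult_lt[OF f, of n] unfolding k_def by (simp add: algebra_simps)
  have not_all_open: "1 \<le> real k * f" if "k \<noteq> n"
    using one_le_kappa_mult[OF f] kappa_le[of f n] that unfolding k_def by fastforce
  have "(real n - real k) / real k \<le> real n * f"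
  proof (cases "k = n")
    case False
    then have "0 < real k"
      using not_all_open by (cases k) auto
    then have "1 / real k \<le> f"
      using not_all_open[OF False] by (simp add: divide_le_eq mult.commute)
    have "(real n - real k) / real k = (real n - real k) * (1 / real k)"
      by simp
    also have "\<dots> \<le> (real n - real k) * f"
      using k \<open>1 / real k \<le> f\<close> by (intro mult_left_mono) auto
    also have "\<dots> \<le> real n * f"
      using f by (simp add: left_diff_distrib)
    finally show ?thesis .
  qed (use f in simp)
  moreover have kf_le: "real k * f \<le> real n * f"
    using k f by simp
  ultimately have "real k * f + (real n - real k) / real k \<le> 2 * real n * f"
    by linarith
  then have "2 / (t * real n) * (real k * f + (real n - real k) / real k) \<le> 2 / (t * real n) * (2 * real n * f)"
    using t by (intro mult_left_mono) auto
  also have "\<dots> = 128 / c"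
    unfolding t_def using f n by (simp add: field_simps)
  finally have far_term: "2 / (t * real n) * (real k * f + (real n - real k) / real k) \<le> 128 / c" .
  have "2 * t * real (card (edges n)) \<le> 2 * t * real n ^ 2"
    using card_edges_le[of n] t by (simp flip: of_nat_power)
  also have "\<dots> = (f * real n * c) * real n / 16"
    unfolding t_def by (simp add: power2_eq_square)
  also have "\<dots> \<le> 2 * real n / 16"
    using fnc by (intro divide_right_mono mult_right_mono) auto
  finally have "exp (2 * t * real (card (edges n)) - real n / 4) \<le> exp (- real n / 8)"
    by simp
  moreover have "(real n - real k) / f \<le> real n ^ 2"
  proof (cases "k = n")
    case False
    then have "1 \<le> real n * f"
      using not_all_open kf_le by fastforce
    then have "1 / f \<le> real n"
      using f by (simp add: field_simps)
    then have "(real n - real k) * (1 / f) \<le> real n * real n"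
      using k f by (intro mult_mono) auto
    then show ?thesis
      by (simp add: power2_eq_square)
  qed simp
  then have "exp 1 * ((real n - real k) / f) \<le> 3 * real n ^ 2"
    using exp_le k f by (intro mult_mono) auto
  then have "real k + exp 1 * (real n - real k) / f \<le> real n + 3 * real n ^ 2"
    using k by simp
  ultimately have "exp (2 * t * real (card (edges n)) - real n / 4) * (real k + exp 1 * (real n - real k) / f)
      \<le> exp (- real n / 8) * (real n + 3 * real n ^ 2)"
    using f k by (intro mult_mono) auto
  also have "\<dots> \<le> 55296"
    using poly_mult_exp_neg_le[of "real n"] n by (simp add: mult.commute)
  finally show "(\<integral>w. ratio n f w \<partial>rsp_space n) \<le> 128 / c + 55296"
    using integral_ratio_le[OF t n] far_term unfolding k_def by linarith
  show "integrable (rsp_space n) (ratio n f)"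
    by (rule integrable_ratio[OF t n])
qed

lemma
  assumes f: "0 < f" and n: "0 < n" and fn: "f * real n < 1"
  shows integrable_ratio_small_f: "integrable (rsp_space n) (ratio n f)"
    and integral_ratio_le_small_f: "(\<integral>w. ratio n f w \<partial>rsp_space n) \<le> 1 + real n ^ 3 * f"
proof -
  interpret prob_space "rsp_space n"
    by (rule prob_space_rsp_space)
  define B where "B w = 1 + real n * (\<Sum>e\<in>edges n. indicator {..<f} (w e))" for w :: "nat set \<Rightarrow> real"
  have le_B: "AE w in rsp_space n. 1 \<le> ratio n f w \<and> ratio n f w \<le> B w"
    using AE_weights_nonneg[of n] unfolding B_def real_light_edges_eq_sum[symmetric]
    by (auto elim!: AE_mp intro: one_le_ratio[OF _ f n] ratio_le_small_f[OF _ f n fn])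
  have B: "has_bochner_integral (rsp_space n) B
      (1 + real n * (\<Sum>e\<in>edges n. \<integral>w. indicator {..<f} (w e) \<partial>rsp_space n))"
    unfolding B_def using has_bochner_integral_integrable[of "rsp_space n" "\<lambda>_. 1 :: real"]
      has_bochner_integral_integrable[OF integrable_indicator_weight_less[OF _ less_imp_le[OF f]]]
    by (intro has_bochner_integral_add has_bochner_integral_mult_right has_bochner_integral_sum)
      (auto simp: prob_space)
  show integrable: "integrable (rsp_space n) (ratio n f)"
    using le_B by (intro Bochner_Integration.integrable_bound[OF integrable.intros[OF B]]) auto
  have "(\<integral>w. ratio n f w \<partial>rsp_space n) \<le> (\<integral>w. B w \<partial>rsp_space n)"
    using le_B by (intro integral_mono_AE[OF integrable integrable.intros[OF B]]) auto
  also have "\<dots> \<le> 1 + real n * (\<Sum>e\<in>edges n. f)"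
    unfolding has_bochner_integral_integral_eq[OF B]
    using integral_indicator_weight_less_le[OF _ less_imp_le[OF f]]
    by (intro add_left_mono mult_left_mono sum_mono) auto
  also have "\<dots> \<le> 1 + real n * (real n ^ 2 * f)"
    using card_edges_le[of n] f by (intro add_left_mono mult_left_mono) (auto simp flip: of_nat_power)
  finally show "(\<integral>w. ratio n f w \<partial>rsp_space n) \<le> 1 + real n ^ 3 * f"
    by (simp add: power2_eq_square power3_eq_cube mult.assoc)
qed

lemma one_le_integral_ratio:
  assumes "0 < f" "0 < n" "integrable (rsp_space n) (ratio n f)"
  shows "1 \<le> (\<integral>w. ratio n f w \<partial>rsp_space n)"
proof -
  interpret prob_space "rsp_space n"
    by (rule prob_space_rsp_space)
  have "(\<integral>w. 1 \<partial>rsp_space n) \<le> (\<integral>w. ratio n f w \<partial>rsp_space n)"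
    using AE_weights_nonneg[of n] one_le_ratio[OF _ assms(1,2)]
    by (intro integral_mono_AE[OF _ assms(3)]) (auto elim!: AE_mp)
  then show ?thesis
    by (simp add: prob_space)
qed

subsection \<open>Asymptotics\<close>

lemma
  fixes f :: "nat \<Rightarrow> real"
  assumes fpos: "\<And>n. 0 < f n" and kappa_lin: "(\<lambda>n. real (kappa (f n) n)) \<in> \<Omega>(\<lambda>n. real n)"
  shows eventually_integrable_ratio: "\<forall>\<^sub>F n in at_top. integrable (rsp_space n) (ratio n (f n))"
    and integral_ratio_bigo_1: "(\<lambda>n. \<integral>w. ratio n (f n) w \<partial>rsp_space n) \<in> O(\<lambda>_. 1)"
proof -
  obtain c where c: "c > 0" and linear: "\<forall>\<^sub>F n in at_top. c * real n \<le> real (kappa (f n) n)"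
    using kappa_lin by (elim landau_omega.bigE) auto
  have "\<forall>\<^sub>F n in at_top. 2 / c \<le> real n"
    using filterlim_real_sequentially by (simp add: filterlim_at_top)
  then have "\<forall>\<^sub>F n in at_top. 2 \<le> c * real n"
    by eventually_elim (use c in \<open>simp add: field_simps\<close>)
  with linear have bounded: "\<forall>\<^sub>F n in at_top. integrable (rsp_space n) (ratio n (f n))
      \<and> 1 \<le> (\<integral>w. ratio n (f n) w \<partial>rsp_space n) \<and> (\<integral>w. ratio n (f n) w \<partial>rsp_space n) \<le> 128 / c + 55296"
    using eventually_gt_at_top[of 0]
    by eventually_elim (use fpos c integrable_ratio_linear_kappa integral_ratio_le_linear_kappa
      one_le_integral_ratio in auto)
  then show "\<forall>\<^sub>F n in at_top. integrable (rsp_space n) (ratio n (f n))"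
    by eventually_elim auto
  show "(\<lambda>n. \<integral>w. ratio n (f n) w \<partial>rsp_space n) \<in> O(\<lambda>_. 1)"
    using bounded by (intro bigoI[where c="128 / c + 55296"]) (auto elim!: eventually_mono)
qed

lemma integral_ratio_tendsto_1:
  fixes f :: "nat \<Rightarrow> real"
  assumes fpos: "\<And>n. 0 < f n" and small: "f \<in> o(\<lambda>n. 1 / real n ^ 3)"
  shows "(\<lambda>n. \<integral>w. ratio n (f n) w \<partial>rsp_space n) \<longlonglongrightarrow> 1"
proof -
  have "(\<lambda>n. f n / (1 / real n ^ 3)) \<longlonglongrightarrow> 0"
    by (rule smalloD_tendsto[OF small])
  then have upper: "(\<lambda>n. real n ^ 3 * f n) \<longlonglongrightarrow> 0"
    by (simp add: mult.commute)
  have "\<forall>\<^sub>F n in sequentially. f n * real n < 1 \<and> 0 < n"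
    using order_tendstoD(2)[OF upper zero_less_one] eventually_gt_at_top[of 0]
  proof eventually_elim
    case (elim n)
    then have "f n * real n \<le> f n * real n ^ 3"
      using fpos[of n] by (intro mult_left_mono) (auto simp: power_increasing[of 1 3, simplified])
    then show ?case
      using elim by (simp add: mult.commute)
  qed
  then have "\<forall>\<^sub>F n in sequentially. 1 \<le> (\<integral>w. ratio n (f n) w \<partial>rsp_space n)"
    and "\<forall>\<^sub>F n in sequentially. (\<integral>w. ratio n (f n) w \<partial>rsp_space n) \<le> 1 + real n ^ 3 * f n"
    by (eventually_elim, use fpos integrable_ratio_small_f integral_ratio_le_small_f one_le_integral_ratio in auto)+
  moreover have "(\<lambda>n. 1 + real n ^ 3 * f n) \<longlonglongrightarrow> 1"
    using tendsto_add[OF tendsto_const[of 1] upper] by simp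
  ultimately show ?thesis
    by (rule tendsto_sandwich[OF _ _ tendsto_const])
qed

theorem corollary2:
  fixes f :: "nat \<Rightarrow> real"
  assumes fpos: "\<And>n. f n > 0"
    and kappa_lin: "(\<lambda>n. real (kappa (f n) n)) \<in> \<Theta>(\<lambda>n. real n)"
  shows "(\<forall>\<^sub>F n in at_top. integrable (rsp_space n) (ratio n (f n)))
    \<and> (\<lambda>n. integral\<^sup>L (rsp_space n) (ratio n (f n)))
        \<in> O(\<lambda>n. 1 + root 4 (ln (real n) * real n ^ 3 * f n ^ 3))
    \<and> (f \<in> O(\<lambda>n. 1 / (real n * root 3 (ln (real n))))
        \<longrightarrow> (\<lambda>n. integral\<^sup>L (rsp_space n) (ratio n (f n))) \<in> O(\<lambda>_. 1))
    \<and> (f \<in> o(\<lambda>n. 1 / real n ^ 3)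
        \<longrightarrow> (\<lambda>n. integral\<^sup>L (rsp_space n) (ratio n (f n))) \<longlonglongrightarrow> 1)"
proof -
  have kappa_Omega: "(\<lambda>n. real (kappa (f n) n)) \<in> \<Omega>(\<lambda>n. real n)"
    using kappa_lin by (rule bigthetaD2)
  have "(\<lambda>_. 1) \<in> O(\<lambda>n. 1 + root 4 (ln (real n) * real n ^ 3 * f n ^ 3))"
  proof (rule bigoI[where c = 1])
    show "\<forall>\<^sub>F n in at_top. norm (1 :: real) \<le> 1 * norm (1 + root 4 (ln (real n) * real n ^ 3 * f n ^ 3))"
      using eventually_ge_at_top[of 1] by eventually_elim (use fpos in \<open>simp add: less_imp_le\<close>)
  qed
  with integral_ratio_bigo_1[OF fpos kappa_Omega]
  have "(\<lambda>n. integral\<^sup>L (rsp_space n) (ratio n (f n))) \<in> O(\<lambda>n. 1 + root 4 (ln (real n) * real n ^ 3 * f n ^ 3))"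
    by (rule landau_o.big_trans)
  then show ?thesis
    using eventually_integrable_ratio[OF fpos kappa_Omega] integral_ratio_bigo_1[OF fpos kappa_Omega]
      integral_ratio_tendsto_1[of f, OF fpos] by blast
qed

end
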